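(* Fix $\lambda_s>0$, $\lambda>0$, $\alpha\in(1,2]$ and $c>0$, where in the case $\alpha=2$ we require $c<\frac12$. For each $n\ge 2$ let $\tilde n(n)$ be an integer with $0\le\tilde n(n)\le\min\{\binom n2, c\,n^\alpha\}$. Then there exist $C'>0$ and $N$ such that for all $n\ge N$ the average age $\Delta=\frac1n\sum_{i=1}^n\Delta_i$ of the greedy jammed network $G^{\mathrm{gr}}\big(n,\binom n2-\tilde n(n)\big)$ satisfies $\Delta\le C' n^{\alpha-1}$.
   Context: Version-age model. A gossip network on a finite node set $\mathcal N$ is specified by source rates $\lambda_{0j}>0$ and gossip rates $\lambda_{ij}\ge 0$ ($i\neq j$; rate at which $i$ sends to $j$); $\lambda_s>0$ is the source's update rate. For nonempty $S\subseteq\mathcal N$ let $N(S)=\{i\in\mathcal N\setminus S:\ \sum_{j\in S}\lambda_{ij}>0\}$ and define $$\Delta_S=\frac{\lambda_s+\sum_{i\in N(S)}\big(\sum_{j\in S}\lambda_{ij}\big)\Delta_{S\cup\{i\}}}{\sum_{j\in S}\lambda_{0j}+\sum_{i\in N(S)}\sum_{j\in S}\lambda_{ij}}$$ (well defined by downward induction on $|S|$); $\Delta_i=\Delta_{\{i\}}$. Networks with uniform link rate: node set $\{1,\dots,n\}$, $\lambda_{0j}=\lambda/n$ for all $j$, and a set of links (unordered pairs of distinct nodes); for each link $\{a,b\}$, $\lambda_{ab}=\lambda_{ba}=\lambda/n$, and $\lambda_{ab}=0$ otherwise. The fully connected network has all $\binom n2$ pairs as links; $\tilde n$ jammers remove $\tilde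 n$ distinct links, leaving $\bar n=\binom n2-\tilde n$ links. Greedy configuration $G^{\mathrm{gr}}(n,\bar n)$ for $0\le\bar n\le\binom n2$: write uniquely $\bar n=\binom k2+c$ with $1\le k\le n$ and $0\le c\le k-1$; the links are all pairs $\{a,b\}$ with $1\le a<b\le k$, together with (if $c>0$) the pairs $\{j,k+1\}$ for $1\le j\le c$; there are no other links. *)

theory Defs
  imports Complex_Main
begin

text \<open>Nodes are natural numbers; V is the finite node set, l0 j = lambda_{0j}
  (source rates), l i j = lambda_{ij} (gossip rates), ls = lambda_s.\<close>

definition nbrs :: "nat set \<Rightarrow> (nat \<Rightarrow> nat \<Rightarrow> real) \<Rightarrow> nat set \<Rightarrow> nat set" where
  "nbrs V l S = {i \<in> V - S. (\<Sum>j\<in>S. l i j) > 0}"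

text \<open>Downward recursion on |S| realised with a fuel parameter k = |V| - |S|.
  When k = 0 (S = V) the neighbour set is empty, so the formula is the defining one.\<close>

fun age_aux :: "nat set \<Rightarrow> (nat \<Rightarrow> real) \<Rightarrow> (nat \<Rightarrow> nat \<Rightarrow> real) \<Rightarrow> real \<Rightarrow> nat \<Rightarrow> nat set \<Rightarrow> real" where
  "age_aux V l0 l ls 0 S =
     ls / ((\<Sum>j\<in>S. l0 j) + (\<Sum>i\<in>nbrs V l S. \<Sum>j\<in>S. l i j))"
| "age_aux V l0 l ls (Suc k) S =
     (ls + (\<Sum>i\<in>nbrs V l S. (\<Sum>j\<in>S. l i j) * age_aux V l0 l ls k (insert i S)))
     / ((\<Sum>j\<in>S. l0 j) + (\<Sum>i\<in>nbrs V l S. \<Sum>j\<in>S. l i j))"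

definition age_set :: "nat set \<Rightarrow> (nat \<Rightarrow> real) \<Rightarrow> (nat \<Rightarrow> nat \<Rightarrow> real) \<Rightarrow> real \<Rightarrow> nat set \<Rightarrow> real" where
  "age_set V l0 l ls S = age_aux V l0 l ls (card V - card S) S"

text \<open>link is a symmetric predicate giving the links (unordered pairs).\<close>

definition unif_l0 :: "nat \<Rightarrow> real \<Rightarrow> nat \<Rightarrow> real" where
  "unif_l0 n lam j = lam / real n"

definition unif_l :: "nat \<Rightarrow> real \<Rightarrow> (nat \<Rightarrow> nat \<Rightarrow> bool) \<Rightarrow> nat \<Rightarrow> nat \<Rightarrow> real" where
  "unif_l n lam link a b = (if link a b then lam / real n else 0)"

definition avg_age :: "nat \<Rightarrow> real \<Rightarrow> real \<Rightarrow> (nat \<Rightarrow> nat \<Rightarrow> bool) \<Rightarrow> real" where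
  "avg_age n lam ls link =
     (1 / real n) * (\<Sum>i\<in>{1..n}. age_set {1..n} (unif_l0 n lam) (unif_l n lam link) ls {i})"

text \<open>nb = (k choose 2) + c with 1 \<le> k \<le> n and 0 \<le> c \<le> k - 1 (unique for nb \<le> n choose 2).\<close>

definition gr_k :: "nat \<Rightarrow> nat \<Rightarrow> nat" where
  "gr_k n nb = (THE k. 1 \<le> k \<and> k \<le> n \<and> k choose 2 \<le> nb \<and> nb - (k choose 2) \<le> k - 1)"

definition gr_c :: "nat \<Rightarrow> nat \<Rightarrow> nat" where
  "gr_c n nb = nb - (gr_k n nb choose 2)"

definition gr_edge :: "nat \<Rightarrow> nat \<Rightarrow> nat \<Rightarrow> nat \<Rightarrow> bool" where
  "gr_edge n nb a b \<longleftrightarrow>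
     (1 \<le> a \<and> a < b \<and> b \<le> gr_k n nb) \<or>
     (gr_c n nb > 0 \<and> 1 \<le> a \<and> a \<le> gr_c n nb \<and> b = gr_k n nb + 1)"

definition gr_link :: "nat \<Rightarrow> nat \<Rightarrow> nat \<Rightarrow> nat \<Rightarrow> bool" where
  "gr_link n nb a b \<longleftrightarrow> gr_edge n nb a b \<or> gr_edge n nb b a"

end

theory Submission
  imports Defs "HOL-Analysis.Harmonic_Numbers"
begin

text \<open>The ages satisfy a downward recursion in \<open>S\<close>, so every supersolution \<open>B\<close> of that
  recursion bounds them from above. For a clique \<open>K\<close> of size \<open>k\<close> the function
  \<open>B S = (n \<lambda>\<^sub>s/\<lambda>) g |S \<inter> K|\<close>, with \<open>g t\<close> the mean of \<open>1/j\<close> over \<open>t \<le> j \<le> k\<close>, is such a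
  supersolution and gives \<open>\<Delta>\<^sub>i \<le> (n \<lambda>\<^sub>s/\<lambda>) H\<^sub>k/k\<close> for \<open>i \<in> K\<close>. Using the clique \<open>{1..k}\<close>
  of the greedy network and singleton cliques for the remaining nodes, the average age is
  at most \<open>(\<lambda>\<^sub>s/\<lambda>)(H\<^sub>k + n - k)\<close>. Removing at most \<open>c n^\<alpha>\<close> links from the complete graph
  leaves \<open>n - k < 2 c n^(\<alpha>-1) + 2\<close>, and \<open>H\<^sub>k \<le> 1 + ln n \<le> 1 + n^(\<alpha>-1)/(\<alpha>-1)\<close>.\<close>

lemma age_set_unfold:
  assumes "finite V" "S \<subseteq> V"
  shows "age_set V l0 l ls S =
     (ls + (\<Sum>i\<in>nbrs V l S. (\<Sum>j\<in>S. l i j) * age_set V l0 l ls (insert i S)))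
     / ((\<Sum>j\<in>S. l0 j) + (\<Sum>i\<in>nbrs V l S. \<Sum>j\<in>S. l i j))"
proof (cases "card V - card S")
  case 0
  with assms have "S = V" by (metis card_mono card_subset_eq diff_is_0_eq le_antisym)
  then show ?thesis using 0 by (simp add: age_set_def nbrs_def)
next
  case (Suc k)
  have "card V - card (insert i S) = k" if "i \<in> nbrs V l S" for i
    using that Suc assms finite_subset by (fastforce simp: nbrs_def)
  then show ?thesis using Suc by (simp add: age_set_def)
qed

lemma age_set_le_supersolution:
  fixes P :: "nat set \<Rightarrow> bool" and B :: "nat set \<Rightarrow> real"
  assumes V: "finite V" and ls: "ls > 0" and l0: "\<And>j. l0 j \<ge> 0"
    and closed: "\<And>S i. P S \<Longrightarrow> S \<subseteq> V \<Longrightarrow> i \<in> nbrs V l S \<Longrightarrow> P (insert i S)"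
    and super: "\<And>S. P S \<Longrightarrow> S \<subseteq> V \<Longrightarrow>
       ls \<le> (\<Sum>j\<in>S. l0 j) * B S + (\<Sum>i\<in>nbrs V l S. (\<Sum>j\<in>S. l i j) * (B S - B (insert i S)))"
    and "P S" "S \<subseteq> V"
  shows "age_set V l0 l ls S \<le> B S"
  using assms(6,7)
proof (induction "card V - card S" arbitrary: S rule: less_induct)
  case less
  let ?N = "nbrs V l S" and ?w = "\<lambda>i. \<Sum>j\<in>S. l i j"
  define D where "D = (\<Sum>j\<in>S. l0 j) + (\<Sum>i\<in>?N. ?w i)"
  have w_pos: "?w i > 0" if "i \<in> ?N" for i
    using that by (simp add: nbrs_def)
  have IH: "age_set V l0 l ls (insert i S) \<le> B (insert i S)" if "i \<in> ?N" for i
  proof -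
    have "i \<in> V" "i \<notin> S" using that by (auto simp: nbrs_def)
    then have "card V - card (insert i S) < card V - card S"
      using less.prems V finite_subset psubset_card_mono[of V S] by fastforce
    then show ?thesis using less closed that \<open>i \<in> V\<close> by blast
  qed
  have super_S: "ls + (\<Sum>i\<in>?N. ?w i * B (insert i S)) \<le> D * B S"
    using super[OF less.prems]
    by (simp add: D_def algebra_simps sum_subtractf sum_distrib_left)
  have "D > 0"
  proof (rule ccontr)
    have "finite ?N" using V by (simp add: nbrs_def)
    moreover assume "\<not> D > 0"
    ultimately have "(\<Sum>j\<in>S. l0 j) = 0" "?N = {}"
      using sum_nonneg[of S l0] l0 sum_pos[of ?N ?w] w_pos unfolding D_def by force+
    then show False using super[OF less.prems] ls by simp
  qed
  have "age_set V l0 l ls S = (ls + (\<Sum>i\<in>?N. ?w i * age_set V l0 l ls (insert i S))) / D"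
    using age_set_unfold[OF V less.prems(2)] by (simp add: D_def)
  also have "\<dots> \<le> (ls + (\<Sum>i\<in>?N. ?w i * B (insert i S))) / D"
    using \<open>D > 0\<close> IH w_pos
    by (intro divide_right_mono add_left_mono sum_mono mult_left_mono) (auto intro: less_imp_le)
  also have "\<dots> \<le> B S"
    using super_S \<open>D > 0\<close> by (simp add: pos_divide_le_eq mult.commute)
  finally show ?case .
qed

lemma sum_unif_l0: "(\<Sum>j\<in>S. unif_l0 n lam j) = real (card S) * lam / real n"
  by (simp add: unif_l0_def)

lemma unif_l_clique_weight:
  assumes "lam > 0" "finite S" "i \<in> K" "i \<notin> S"
    and clique: "\<And>a b. a \<in> K \<Longrightarrow> b \<in> K \<Longrightarrow> a \<noteq> b \<Longrightarrow> link a b"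
  shows "real (card (S \<inter> K)) * lam / real n \<le> (\<Sum>j\<in>S. unif_l n lam link i j)"
proof -
  have "(\<Sum>j\<in>S \<inter> K. unif_l n lam link i j) = (\<Sum>j\<in>S \<inter> K. lam / real n)"
    using assms by (intro sum.cong) (auto simp: unif_l_def)
  then have "real (card (S \<inter> K)) * lam / real n = (\<Sum>j\<in>S \<inter> K. unif_l n lam link i j)"
    by simp
  also have "\<dots> \<le> (\<Sum>j\<in>S. unif_l n lam link i j)"
    using assms by (intro sum_mono2) (auto simp: unif_l_def)
  finally show ?thesis .
qed

text \<open>Up to the factor \<open>n \<lambda>\<^sub>s/\<lambda>\<close>, \<open>clique_profile k t\<close> is the age of a \<open>t\<close>-set in an
  isolated \<open>k\<close>-clique with link rate \<open>\<lambda>/n\<close>: it solves the recursion restricted to the clique,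
  see \<open>clique_profile_recurrence\<close>.\<close>

definition clique_profile :: "nat \<Rightarrow> nat \<Rightarrow> real" where
  "clique_profile k t = (\<Sum>j=t..k. inverse (real j)) / (real k - real t + 1)"

lemma clique_profile_1: "clique_profile k 1 = harm k / real k"
  by (simp add: clique_profile_def harm_def)

lemma clique_profile_nonneg: "t \<le> k \<Longrightarrow> clique_profile k t \<ge> 0"
  unfolding clique_profile_def by (intro divide_nonneg_nonneg sum_nonneg) auto

lemma clique_profile_recurrence:
  assumes "1 \<le> t" "t \<le> k"
  shows "real t * (clique_profile k t
           + (real k - real t) * (clique_profile k t - clique_profile k (Suc t))) = 1"
proof -
  have "clique_profile k t + (real k - real t) * (clique_profile k t - clique_profile k (Suc t))
      = (real k - real t + 1) * clique_profile k t - (real k - real t) * clique_profile k (Suc t)"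
    by (simp add: algebra_simps)
  also have "(real k - real t + 1) * clique_profile k t = (\<Sum>j=t..k. inverse (real j))"
    using assms by (simp add: clique_profile_def)
  also have "(real k - real t) * clique_profile k (Suc t) = (\<Sum>j=Suc t..k. inverse (real j))"
    using assms by (cases "t = k") (auto simp: clique_profile_def)
  also have "(\<Sum>j=t..k. inverse (real j)) = inverse (real t) + (\<Sum>j=Suc t..k. inverse (real j))"
    using assms by (simp add: sum.atLeast_Suc_atMost)
  finally show ?thesis using assms by simp
qed

lemma clique_profile_antimono:
  assumes "1 \<le> t" "t < k"
  shows "clique_profile k (Suc t) \<le> clique_profile k t"
proof -
  define u where "u = (\<Sum>j=Suc t..k. inverse (real j))"
  have "u \<le> real (card {Suc t..k}) * inverse (real t)"
    unfolding u_def using assms by (intro sum_bounded_above) (auto simp: field_simps)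
  then have u: "u * real t \<le> real k - real t"
    using assms by (simp add: of_nat_diff field_simps)
  have "clique_profile k (Suc t) = u / (real k - real t)"
    by (simp add: clique_profile_def u_def)
  moreover have "clique_profile k t = (inverse (real t) + u) / (real k - real t + 1)"
    using assms by (simp add: clique_profile_def u_def sum.atLeast_Suc_atMost)
  moreover have "u / (real k - real t) \<le> (inverse (real t) + u) / (real k - real t + 1)"
    using assms u by (simp add: divide_simps) (simp add: field_simps)
  ultimately show ?thesis
    by simp
qed

lemma harm_le_1_plus_ln: "1 \<le> k \<Longrightarrow> harm k \<le> 1 + ln (real k)"
proof (induction k rule: dec_induct)
  case base
  then show ?case by (simp add: harm_expand)
next
  case (step m)
  have "ln (real m / real (Suc m)) \<le> real m / real (Suc m) - 1"
    using step by (intro ln_le_minus_one) auto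
  then have "inverse (real (Suc m)) \<le> ln (real (Suc m)) - ln (real m)"
    using step by (simp add: ln_div field_simps)
  then show ?case using step by (simp add: harm_Suc)
qed

definition clique_age_bound :: "nat \<Rightarrow> real \<Rightarrow> real \<Rightarrow> nat set \<Rightarrow> nat set \<Rightarrow> real" where
  "clique_age_bound n lam ls K S = real n * ls / lam * clique_profile (card K) (card (S \<inter> K))"

lemma clique_age_bound_insert:
  assumes "finite K" "finite S" "j \<in> K - S"
  shows "clique_age_bound n lam ls K S - clique_age_bound n lam ls K (insert j S)
       = real n * ls / lam * (clique_profile (card K) (card (S \<inter> K))
                              - clique_profile (card K) (Suc (card (S \<inter> K))))"
  using assms by (simp add: clique_age_bound_def Int_insert_left right_diff_distrib)

lemma clique_age_bound_insert_le:
  assumes "lam > 0" "ls > 0" "finite K" "finite S" "S \<inter> K \<noteq> {}"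
  shows "clique_age_bound n lam ls K (insert j S) \<le> clique_age_bound n lam ls K S"
proof (cases "j \<in> K - S")
  case True
  then have "S \<inter> K \<subset> K" by blast
  then have "card (S \<inter> K) < card K" using assms(3) by (rule psubset_card_mono[rotated])
  moreover have "1 \<le> card (S \<inter> K)" using assms(4,5) by (simp add: Suc_leI card_gt_0_iff)
  ultimately have "clique_profile (card K) (Suc (card (S \<inter> K))) \<le> clique_profile (card K) (card (S \<inter> K))"
    by (intro clique_profile_antimono)
  moreover have "real n * ls / lam \<ge> 0" using assms(1,2) by simp
  ultimately have "0 \<le> real n * ls / lam * (clique_profile (card K) (card (S \<inter> K))
                          - clique_profile (card K) (Suc (card (S \<inter> K))))"
    by (intro mult_nonneg_nonneg) simp_all
  then show ?thesis
    using clique_age_bound_insert[OF assms(3,4) True, of n lam ls] by linarith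
next
  case False
  then have "insert j S \<inter> K = S \<inter> K" by auto
  then show ?thesis by (simp add: clique_age_bound_def)
qed

lemma clique_age_bound_supersolution:
  assumes lam: "lam > 0" and ls: "ls > 0" and K: "K \<subseteq> {1..n}"
    and clique: "\<And>a b. a \<in> K \<Longrightarrow> b \<in> K \<Longrightarrow> a \<noteq> b \<Longrightarrow> link a b"
    and SK: "S \<inter> K \<noteq> {}" and SV: "S \<subseteq> {1..n}"
  defines "B \<equiv> clique_age_bound n lam ls K" and "l \<equiv> unif_l n lam link"
  shows "ls \<le> (\<Sum>j\<in>S. unif_l0 n lam j) * B S
              + (\<Sum>i\<in>nbrs {1..n} l S. (\<Sum>j\<in>S. l i j) * (B S - B (insert i S)))"
proof -
  define k where "k = card K"
  define t where "t = card (S \<inter> K)"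
  define M where "M = real n * ls / lam"
  define a where "a = real t * lam / real n"
  let ?drop = "clique_profile k t - clique_profile k (Suc t)"
  let ?gain = "\<lambda>i. (\<Sum>j\<in>S. l i j) * (B S - B (insert i S))"
  have finK: "finite K" and finS: "finite S" using K SV finite_subset by blast+
  have "n > 0" using K SK by auto
  have t: "1 \<le> t" "t \<le> k" "t \<le> card S"
    using SK finS finK by (auto simp: t_def k_def Suc_leI card_gt_0_iff intro: card_mono)
  have weight: "a \<le> (\<Sum>j\<in>S. l i j)" if "i \<in> K - S" for i
    using unif_l_clique_weight[OF lam finS _ _ clique] that by (simp add: a_def t_def l_def)
  have drop_K: "B S - B (insert i S) = M * ?drop" if "i \<in> K - S" for i
    using clique_age_bound_insert[OF finK finS that] by (simp add: B_def M_def k_def t_def)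
  have drop_nonneg: "B S - B (insert i S) \<ge> 0" for i
    using clique_age_bound_insert_le[OF lam ls finK finS SK] by (simp add: B_def)
  have KS_nbrs: "K - S \<subseteq> nbrs {1..n} l S"
    using weight K t lam \<open>n > 0\<close> by (force simp: nbrs_def a_def intro: less_le_trans[of 0 a])
  txt \<open>Only clique nodes outside \<open>S\<close> lower \<open>B\<close>; there are \<open>k - t\<close> of them, each of weight
    at least \<open>t \<lambda>/n\<close>, and the recurrence of \<open>clique_profile\<close> makes this lower bound exactly \<open>ls\<close>.\<close>
  have "ls = ls * (real t * (clique_profile k t + real (card (K - S)) * ?drop))"
    using clique_profile_recurrence[OF t(1,2)] finK t(2)
    by (simp add: k_def t_def card_Diff_subset_Int Int_commute of_nat_diff)
  also have "\<dots> = a * B S + real (card (K - S)) * (a * (M * ?drop))"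
    using lam \<open>n > 0\<close>
    by (simp add: a_def M_def B_def clique_age_bound_def k_def t_def algebra_simps)
  also have "\<dots> \<le> (\<Sum>j\<in>S. unif_l0 n lam j) * B S + (\<Sum>i\<in>K - S. ?gain i)"
  proof (intro add_mono mult_right_mono)
    show "a \<le> (\<Sum>j\<in>S. unif_l0 n lam j)"
      using t lam by (simp add: a_def sum_unif_l0 divide_right_mono)
    show "0 \<le> B S"
      using clique_profile_nonneg[OF t(2)] lam ls
      by (simp add: B_def clique_age_bound_def k_def t_def)
    show "real (card (K - S)) * (a * (M * ?drop)) \<le> (\<Sum>i\<in>K - S. ?gain i)"
    proof (rule sum_bounded_below)
      fix i assume i: "i \<in> K - S"
      show "a * (M * ?drop) \<le> ?gain i"
        using mult_right_mono[OF weight[OF i] drop_nonneg[of i]] drop_K[OF i] by simp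
    qed
  qed
  also have "\<dots> \<le> (\<Sum>j\<in>S. unif_l0 n lam j) * B S + (\<Sum>i\<in>nbrs {1..n} l S. ?gain i)"
    using KS_nbrs drop_nonneg
    by (intro add_left_mono sum_mono2) (auto simp: nbrs_def intro: mult_nonneg_nonneg less_imp_le)
  finally show ?thesis .
qed

lemma age_set_unif_clique_le:
  assumes lam: "lam > 0" and ls: "ls > 0" and K: "K \<subseteq> {1..n}" and i: "i \<in> K"
    and clique: "\<And>a b. a \<in> K \<Longrightarrow> b \<in> K \<Longrightarrow> a \<noteq> b \<Longrightarrow> link a b"
  shows "age_set {1..n} (unif_l0 n lam) (unif_l n lam link) ls {i}
           \<le> real n * ls / lam * (harm (card K) / real (card K))"
proof -
  note super = clique_age_bound_supersolution[OF lam ls K clique]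
  have "age_set {1..n} (unif_l0 n lam) (unif_l n lam link) ls {i}
      \<le> clique_age_bound n lam ls K {i}"
    using i K
    by (intro age_set_le_supersolution[where P = "\<lambda>S. S \<inter> K \<noteq> {}", OF _ ls _ _ super])
       (auto simp: unif_l0_def lam less_imp_le)
  also have "\<dots> = real n * ls / lam * (harm (card K) / real (card K))"
    using i clique_profile_1[of "card K"] by (simp add: clique_age_bound_def)
  finally show ?thesis .
qed

lemma Suc_choose_two: "Suc k choose 2 = (k choose 2) + k"
  by (simp add: numeral_2_eq_2)

lemma real_choose_two: "2 * real (n choose 2) = real n * (real n - 1)"
  by (induction n) (simp_all add: Suc_choose_two algebra_simps)

lemma choose_two_Suc_le: "k < k' \<Longrightarrow> (k choose 2) + k \<le> k' choose 2"
  using monoD[OF mono_iff_le_Suc[THEN iffD2], of "\<lambda>k. k choose 2" "Suc k" k']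
  by (simp add: Suc_choose_two Suc_leI)

lemma gr_k_bounds:
  assumes "1 \<le> n" "nb \<le> n choose 2"
  shows "1 \<le> gr_k n nb" "gr_k n nb \<le> n" "nb < (gr_k n nb choose 2) + gr_k n nb"
proof -
  define Q where "Q k \<longleftrightarrow> 1 \<le> k \<and> k \<le> n \<and> k choose 2 \<le> nb \<and> nb - (k choose 2) \<le> k - 1" for k
  define A where "A = {k\<in>{1..n}. k choose 2 \<le> nb}"
  define k0 where "k0 = Max A"
  have "finite A" "1 \<in> A" using assms by (auto simp: A_def numeral_2_eq_2)
  then have "k0 \<in> A" and k0_max: "\<And>k. k \<in> A \<Longrightarrow> k \<le> k0"
    by (auto simp: k0_def intro!: Max_in)
  then have k0: "k0 \<in> {1..n}" "k0 choose 2 \<le> nb"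
    by (auto simp: A_def)
  have "Q k0"
  proof (cases "k0 = n")
    case False
    then have "\<not> Suc k0 choose 2 \<le> nb"
      using k0 k0_max[of "Suc k0"] by (auto simp: A_def)
    then show ?thesis using k0 by (auto simp: Q_def Suc_choose_two)
  qed (use k0 assms in \<open>auto simp: Q_def\<close>)
  moreover have "k = k0" if "Q k" for k
    using choose_two_Suc_le[of k k0] choose_two_Suc_le[of k0 k] that \<open>Q k0\<close>
    by (cases k k0 rule: linorder_cases) (auto simp: Q_def)
  ultimately have "Q (gr_k n nb)"
    unfolding gr_k_def Q_def[symmetric] by (rule theI)
  then show "1 \<le> gr_k n nb" "gr_k n nb \<le> n" "nb < (gr_k n nb choose 2) + gr_k n nb"
    by (auto simp: Q_def)
qed

lemma gr_link_clique:
  "a \<in> {1..gr_k n nb} \<Longrightarrow> b \<in> {1..gr_k n nb} \<Longrightarrow> a \<noteq> b \<Longrightarrow> gr_link n nb a b"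
  by (cases a b rule: linorder_cases) (auto simp: gr_link_def gr_edge_def)

lemma gr_k_deficit:
  assumes "1 \<le> n" "m \<le> n choose 2"
  shows "real n - real (gr_k n ((n choose 2) - m)) < 2 * real m / real n + 2"
proof -
  define k where "k = gr_k n ((n choose 2) - m)"
  have k: "k \<le> n" "(n choose 2) - m < (k choose 2) + k"
    using gr_k_bounds[OF assms(1) diff_le_self] by (auto simp: k_def)
  have "real (n choose 2) - real m < real (k choose 2) + real k"
    using k(2) assms(2) by (simp add: of_nat_diff flip: of_nat_add of_nat_less_iff)
  then have "real n * (real n - 1) - 2 * real m < real k * (real k - 1) + 2 * real k"
    using real_choose_two[of n] real_choose_two[of k] by linarith
  also have "\<dots> = real k * (real k + 1)"
    by (simp add: algebra_simps)
  also have "\<dots> \<le> real n * (real k + 1)"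
    using k(1) by (intro mult_right_mono) auto
  finally have "real n * (real n - real k - 2) < 2 * real m"
    by (simp add: algebra_simps)
  then show ?thesis
    using assms(1) by (simp add: k_def field_simps)
qed

lemma avg_age_gr_link_le:
  assumes lam: "lam > 0" and ls: "ls > 0" and "1 \<le> n" "nb \<le> n choose 2"
  shows "avg_age n lam ls (gr_link n nb)
           \<le> ls / lam * (harm (gr_k n nb) + (real n - real (gr_k n nb)))"
proof -
  define k where "k = gr_k n nb"
  let ?age = "\<lambda>i. age_set {1..n} (unif_l0 n lam) (unif_l n lam (gr_link n nb)) ls {i}"
  have k: "1 \<le> k" "k \<le> n" using gr_k_bounds[OF assms(3,4)] by (auto simp: k_def)
  have clique: "?age i \<le> real n * ls / lam * (harm k / real k)" if "i \<in> {1..k}" for i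
    using age_set_unif_clique_le[OF lam ls, of "{1..k}" n i] that k gr_link_clique
    by (simp add: k_def)
  have rest: "?age i \<le> real n * ls / lam" if "i \<in> {Suc k..n}" for i
    using age_set_unif_clique_le[OF lam ls, of "{i}" n i] that by (simp add: harm_def)
  have "{1..n} = {1..k} \<union> {Suc k..n}" using k by auto
  then have "(\<Sum>i\<in>{1..n}. ?age i) = (\<Sum>i\<in>{1..k}. ?age i) + (\<Sum>i\<in>{Suc k..n}. ?age i)"
    by (simp add: sum.union_disjoint)
  also have "\<dots> \<le> real k * (real n * ls / lam * (harm k / real k)) + real (n - k) * (real n * ls / lam)"
    using clique rest by (intro add_mono order_trans[OF sum_bounded_above]) auto
  also have "\<dots> = real n * (ls / lam * (harm k + (real n - real k)))"
    using k lam by (simp add: of_nat_diff field_simps)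
  finally show ?thesis
    using k by (simp add: avg_age_def k_def field_simps)
qed

lemma avg_age_gr_link_removed_le:
  assumes lam: "lam > 0" and ls: "ls > 0" and e: "e > 0" and n: "1 \<le> n"
    and m: "m \<le> n choose 2" "real m \<le> c * real n powr (1 + e)"
  shows "avg_age n lam ls (gr_link n ((n choose 2) - m))
           \<le> ls / lam * (3 + 1 / e + 2 * c) * real n powr e"
proof -
  define k where "k = gr_k n ((n choose 2) - m)"
  have "1 \<le> k" "k \<le> n" using gr_k_bounds[OF n diff_le_self] by (auto simp: k_def)
  then have "harm k \<le> 1 + ln (real n)"
    using harm_le_1_plus_ln[of k] by (simp add: order.trans)
  also have "ln (real n) \<le> real n powr e / e"
    using ln_powr_bound n e by simp
  finally have harm: "harm k \<le> 1 + real n powr e / e" by simp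
  have "real n - real k < 2 * real m / real n + 2"
    using gr_k_deficit[OF n m(1)] by (simp add: k_def)
  also have "2 * real m / real n \<le> 2 * c * real n powr e"
    using m(2) n by (simp add: powr_add divide_le_eq algebra_simps)
  finally have deficit: "real n - real k < 2 * c * real n powr e + 2" by simp
  have "avg_age n lam ls (gr_link n ((n choose 2) - m)) \<le> ls / lam * (harm k + (real n - real k))"
    using avg_age_gr_link_le[OF lam ls n diff_le_self] by (simp add: k_def)
  also have "\<dots> \<le> ls / lam * (3 + real n powr e / e + 2 * c * real n powr e)"
    using harm deficit lam ls by (intro mult_left_mono) auto
  also have "\<dots> \<le> ls / lam * (3 * real n powr e + real n powr e / e + 2 * c * real n powr e)"
    using ge_one_powr_ge_zero[of "real n" e] n e lam ls by (intro mult_left_mono) auto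
  also have "\<dots> = ls / lam * (3 + 1 / e + 2 * c) * real n powr e"
    by (simp add: algebra_simps)
  finally show ?thesis .
qed

theorem lemma6:
  fixes ls lam \<alpha> c :: real and ntil :: "nat \<Rightarrow> nat"
  assumes "ls > 0" and "lam > 0" and "1 < \<alpha>" and "\<alpha> \<le> 2" and "c > 0"
    and "\<alpha> = 2 \<longrightarrow> c < 1/2"
    and "\<And>n. n \<ge> 2 \<Longrightarrow> real (ntil n) \<le> min (real (n choose 2)) (c * real n powr \<alpha>)"
  shows "\<exists>C'>0. \<exists>N. \<forall>n\<ge>N.
           avg_age n lam ls (gr_link n ((n choose 2) - ntil n)) \<le> C' * real n powr (\<alpha> - 1)"
proof (intro exI conjI allI impI)
  show "ls / lam * (3 + 1 / (\<alpha> - 1) + 2 * c) > 0"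
    using assms(1,2,3,5) by (simp add: add_pos_nonneg)
  fix n :: nat assume "n \<ge> 2"
  then show "avg_age n lam ls (gr_link n ((n choose 2) - ntil n))
               \<le> ls / lam * (3 + 1 / (\<alpha> - 1) + 2 * c) * real n powr (\<alpha> - 1)"
    using avg_age_gr_link_removed_le[OF assms(2,1), of "\<alpha> - 1" n "ntil n" c] assms(3) assms(7)[of n]
    by simp
qed

end
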